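(* Let $\mathbf C$ be a category of coframes and $L$ a $\mathbf C$-object. (1) If $L$ is spatial, then $\nu=\operatorname{adh}_{\lim_\nu}$ for every adherence structure $\nu$ on $L$. (2) If $L$ is prime-continuous, then $\lim=\lim_{\operatorname{adh}_{\lim}}$ for every classical pretopological convergence structure $\lim$ on $L$. (3) If $L$ is both spatial and prime-continuous, then the maps $\nu\mapsto\lim_\nu$ and $\lim\mapsto\operatorname{adh}_{\lim}$ define an order isomorphism between adherence structures and classical pretopological convergence structures on $L$ (both ordered pointwise).
   Context: A category of coframes has coframes (complete lattices where arbitrary infima distribute over binary suprema) as objects and coframe morphisms. $\mathcal C_L$ is the set of complemented elements of $L$. A filter on $L$ is a non-empty upward-closed subset closed under binary meets ($L$ allowed); $\mathbb F L$ is the set of filters. For $\mathcal A\subseteq L$, $\mathcal A^\#=\{\ell: a\wedge\ell\ne\bot\ \forall a\in\mathcal A\}$. A convergence structure on $L$ is a monotone map $\lim:\mathbb F L\to L$; it is pretopological if $\lim\bigcap_i\mathcal F_i=\bigwedge_i\lim\mathcal F_i$ for every family of filters, and classical if $\mathcal F\cap\mathcal C_L=\mathcal G\cap\mathcal C_L$ implies $\lim\mathcal F=\lim\mathcal G$. Its raw adherence is $\operatorname{adh}^0_{\lim}\ell=\bigvee\{\lim\mathcal F:\ell\in\mathcal F^\#\}$, and its adherence is $\operatorname{adh}_{\lim}\ell=\bigwedge\{\operatorname{adh}^0_{\lim}a:a\in\mathcal C_L,a\ge\ell\}$. An adherence structure on $L$ is a monotone $\nu:L\to L$ preserving finite suprema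 of complemented elements with $\nu(\ell)=\bigwedge\{\nu(a):a\in\mathcal C_L,a\ge\ell\}$; it induces $\lim_\nu\mathcal F=\bigwedge\{\nu(a):a\in\mathcal C_L\cap\mathcal F^\#\}$. $L$ is spatial if every element is a supremum of join-prime elements (an element $x\neq\bot$ with $x\le\ell_1\vee\ell_2$ implying $x\le\ell_1$ or $x\le\ell_2$). Write $\ell\lll\ell'$ if for every $S\subseteq L$ with $\ell'\le\bigvee S$ some element of $S$ is $\ge\ell$; $L$ is prime-continuous if every element $\ell$ is the supremum of the elements $\lll\ell$. *)

theory Defs
  imports Main
begin

class coframe = complete_lattice +
  assumes sup_Inf_distrib_coframe: "sup a (Inf S) = (INF s\<in>S. sup a s)"

definition complemented :: "'a::coframe set" where
  "complemented = {a. \<exists>b. inf a b = bot \<and> sup a b = top}"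

definition is_filter :: "'a::coframe set \<Rightarrow> bool" where
  "is_filter F \<longleftrightarrow> F \<noteq> {} \<and> (\<forall>x y. x \<in> F \<and> x \<le> y \<longrightarrow> y \<in> F)
                   \<and> (\<forall>x y. x \<in> F \<and> y \<in> F \<longrightarrow> inf x y \<in> F)"

definition sharp :: "'a::coframe set \<Rightarrow> 'a set" where
  "sharp A = {l. \<forall>a\<in>A. inf a l \<noteq> bot}"

text \<open>Convergence structures: monotone maps from filters to L (values on non-filters irrelevant).\<close>
definition convergence_structure :: "('a::coframe set \<Rightarrow> 'a) \<Rightarrow> bool" where
  "convergence_structure lim \<longleftrightarrow>
     (\<forall>F G. is_filter F \<and> is_filter G \<and> F \<subseteq> G \<longrightarrow> lim F \<le> lim G)"

definition pretopological :: "('a::coframe set \<Rightarrow> 'a) \<Rightarrow> bool" where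
  "pretopological lim \<longleftrightarrow>
     (\<forall>\<FF>. (\<forall>F\<in>\<FF>. is_filter F) \<longrightarrow> lim (\<Inter>\<FF>) = (INF F\<in>\<FF>. lim F))"

definition classical :: "('a::coframe set \<Rightarrow> 'a) \<Rightarrow> bool" where
  "classical lim \<longleftrightarrow>
     (\<forall>F G. is_filter F \<and> is_filter G \<and> F \<inter> complemented = G \<inter> complemented
            \<longrightarrow> lim F = lim G)"

definition classical_pretop_conv :: "('a::coframe set \<Rightarrow> 'a) \<Rightarrow> bool" where
  "classical_pretop_conv lim \<longleftrightarrow>
     convergence_structure lim \<and> pretopological lim \<and> classical lim"

definition raw_adh :: "('a::coframe set \<Rightarrow> 'a) \<Rightarrow> 'a \<Rightarrow> 'a" where
  "raw_adh lim l = Sup {lim F | F. is_filter F \<and> l \<in> sharp F}"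

definition adh :: "('a::coframe set \<Rightarrow> 'a) \<Rightarrow> 'a \<Rightarrow> 'a" where
  "adh lim l = Inf {raw_adh lim a | a. a \<in> complemented \<and> l \<le> a}"

text \<open>Adherence structures; "finite suprema" includes the empty supremum (bottom).\<close>
definition adherence_structure :: "('a::coframe \<Rightarrow> 'a) \<Rightarrow> bool" where
  "adherence_structure \<nu> \<longleftrightarrow>
     mono \<nu> \<and> \<nu> bot = bot
     \<and> (\<forall>a b. a \<in> complemented \<and> b \<in> complemented \<longrightarrow> \<nu> (sup a b) = sup (\<nu> a) (\<nu> b))
     \<and> (\<forall>l. \<nu> l = Inf {\<nu> a | a. a \<in> complemented \<and> l \<le> a})"

definition lim_of :: "('a::coframe \<Rightarrow> 'a) \<Rightarrow> 'a set \<Rightarrow> 'a" where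
  "lim_of \<nu> F = Inf {\<nu> a | a. a \<in> complemented \<inter> sharp F}"

definition join_prime :: "'a::coframe \<Rightarrow> bool" where
  "join_prime x \<longleftrightarrow> x \<noteq> bot \<and> (\<forall>l1 l2. x \<le> sup l1 l2 \<longrightarrow> x \<le> l1 \<or> x \<le> l2)"

definition spatial :: "'a::coframe itself \<Rightarrow> bool" where
  "spatial _ \<longleftrightarrow> (\<forall>l::'a. l = Sup {x. join_prime x \<and> x \<le> l})"

definition prime_below :: "'a::coframe \<Rightarrow> 'a \<Rightarrow> bool" where
  "prime_below l l' \<longleftrightarrow> (\<forall>S. l' \<le> Sup S \<longrightarrow> (\<exists>s\<in>S. l \<le> s))"

definition prime_continuous :: "'a::coframe itself \<Rightarrow> bool" where
  "prime_continuous _ \<longleftrightarrow> (\<forall>l::'a. l = Sup {m. prime_below m l})"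

end

(*
  Everything rests on one observation: if c and d are complements and F is a filter, then c meets
  every member of F exactly when d is not in F. Hence lim_nu F only sees the complemented members
  of F, which makes lim_nu a classical pretopological convergence for every nu, while adh_lim is an
  adherence structure for every lim.

  (1) For a join-prime x <= nu a, take the filter generated by the complemented c whose complement
  d has x not<= nu d. The complemented elements of its grill F# are exactly the b with x <= nu b, so its
  lim_nu-limit is above x and it witnesses x <= adh a; spatiality gives nu a <= adh a.

  (2) For m <<< lim_adh F, the intersection V of all filters with limit above m still has limit
  above m (pretopological), and so has the filter generated by the complemented members of V
  (classical). If such a member c were missing from F, its complement would be in the grill of F,
  and primeness of m would produce a filter G containing V, with limit above m, whose grill contains
  the complement of c: impossible. So that filter is coarser than F, m <= lim F, and
  prime-continuity concludes.

  (3) Both constructions are monotone, so (1) and (2) turn them into inverse order isomorphisms.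
*)

theory Submission
  imports Defs
begin

context coframe begin

subclass distrib_lattice
proof
  fix x y z :: 'a
  show "sup x (inf y z) = inf (sup x y) (sup x z)"
    using sup_Inf_distrib_coframe[of x "{y, z}"] by simp
qed

end

definition complementary :: "'a::coframe \<Rightarrow> 'a \<Rightarrow> bool" where
  "complementary c d \<longleftrightarrow> inf c d = bot \<and> sup c d = top"

lemma complemented_iff: "c \<in> complemented \<longleftrightarrow> (\<exists>d. complementary c d)"
  by (simp add: complemented_def complementary_def)

lemma complementary_sym: "complementary c d \<Longrightarrow> complementary d c"
  by (simp add: complementary_def inf.commute sup.commute)

lemma complemented_if_complementary: "complementary c d \<Longrightarrow> d \<in> complemented"
  using complemented_iff complementary_sym by blast

lemma complementary_inf_sup:
  assumes "complementary c1 d1" "complementary c2 d2"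
  shows "complementary (inf c1 c2) (sup d1 d2)"
proof -
  have "inf (inf c1 c2) (sup d1 d2) = sup (inf c2 (inf c1 d1)) (inf c1 (inf c2 d2))"
    by (simp add: inf_sup_distrib1 ac_simps)
  moreover have "sup (inf c1 c2) (sup d1 d2) = inf (sup (sup d1 d2) c1) (sup (sup d1 d2) c2)"
    by (metis sup.commute sup_inf_distrib1)
  moreover have "sup (sup d1 d2) c1 = sup d2 (sup c1 d1)" "sup (sup d1 d2) c2 = sup d1 (sup c2 d2)"
    by (simp_all add: ac_simps)
  ultimately show ?thesis using assms by (simp add: complementary_def)
qed

lemma complementary_disjoint_iff_le:
  assumes "complementary c d" shows "inf f c = bot \<longleftrightarrow> f \<le> d"
proof
  assume "inf f c = bot"
  have "f = inf f (sup c d)" using assms by (simp add: complementary_def)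
  also have "\<dots> = inf f d" using \<open>inf f c = bot\<close> by (simp add: inf_sup_distrib1)
  finally show "f \<le> d" by (metis inf.cobounded2)
next
  assume "f \<le> d"
  then have "inf f c \<le> inf d c" by (simp add: inf.coboundedI1)
  then show "inf f c = bot" using assms by (metis complementary_def inf.commute le_bot)
qed

lemma complemented_inf: "a \<in> complemented \<Longrightarrow> b \<in> complemented \<Longrightarrow> inf a b \<in> complemented"
  by (meson complemented_iff complementary_inf_sup)

lemma complemented_sup: "a \<in> complemented \<Longrightarrow> b \<in> complemented \<Longrightarrow> sup a b \<in> complemented"
  by (meson complemented_iff complementary_inf_sup complementary_sym)

lemma top_complemented: "top \<in> complemented"
  by (simp add: complemented_def)

lemma bot_complemented: "bot \<in> complemented"
  by (simp add: complemented_def)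

lemma top_in_filter: "is_filter F \<Longrightarrow> top \<in> F"
  unfolding is_filter_def by (meson ex_in_conv top_greatest)

lemma is_filter_Inter:
  assumes "\<And>F. F \<in> FF \<Longrightarrow> is_filter F" shows "is_filter (\<Inter>FF)"
proof -
  have "top \<in> \<Inter>FF" using assms top_in_filter by blast
  then show ?thesis using assms unfolding is_filter_def by blast
qed

definition up_closure :: "'a::coframe set \<Rightarrow> 'a set" where
  "up_closure S = {l. \<exists>c\<in>S. c \<le> l}"

lemma is_filter_up_closure:
  assumes "top \<in> S" and "\<And>c1 c2. c1 \<in> S \<Longrightarrow> c2 \<in> S \<Longrightarrow> inf c1 c2 \<in> S"
  shows "is_filter (up_closure S)"
proof -
  have "up_closure S \<noteq> {}" using assms(1) unfolding up_closure_def by blast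
  moreover have "y \<in> up_closure S" if "x \<in> up_closure S" "x \<le> y" for x y
    using that unfolding up_closure_def by (blast intro: order_trans)
  moreover have "inf x y \<in> up_closure S" if "x \<in> up_closure S" "y \<in> up_closure S" for x y
  proof -
    from that obtain c d where "c \<in> S" "c \<le> x" "d \<in> S" "d \<le> y"
      unfolding up_closure_def by blast
    then show ?thesis using assms(2) inf_mono unfolding up_closure_def by blast
  qed
  ultimately show ?thesis unfolding is_filter_def by blast
qed

lemma sharp_antimono: "F \<subseteq> G \<Longrightarrow> sharp G \<subseteq> sharp F"
  unfolding sharp_def by blast

lemma sharp_upward:
  assumes "l \<in> sharp F" "l \<le> l'" shows "l' \<in> sharp F"
  unfolding sharp_def
proof (clarify)
  fix a assume "a \<in> F" "inf a l' = bot"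
  then have "inf a l = bot" using inf_mono[OF order_refl assms(2), of a] by (metis le_bot)
  then show False using assms(1) \<open>a \<in> F\<close> unfolding sharp_def by blast
qed

lemma bot_notin_sharp: "is_filter F \<Longrightarrow> bot \<notin> sharp F"
  unfolding is_filter_def sharp_def by auto

lemma sup_in_sharp_iff:
  assumes "is_filter F" shows "sup a b \<in> sharp F \<longleftrightarrow> a \<in> sharp F \<or> b \<in> sharp F"
proof
  assume "sup a b \<in> sharp F"
  show "a \<in> sharp F \<or> b \<in> sharp F"
  proof (rule ccontr)
    assume "\<not> (a \<in> sharp F \<or> b \<in> sharp F)"
    then obtain f g where "f \<in> F" "inf f a = bot" "g \<in> F" "inf g b = bot"
      unfolding sharp_def by auto
    moreover have "inf (inf f g) (sup a b) = sup (inf g (inf f a)) (inf f (inf g b))"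
      by (simp add: inf_sup_distrib1 inf.assoc inf.left_commute)
    ultimately have "inf f g \<in> F" and "inf (inf f g) (sup a b) = bot"
      using assms unfolding is_filter_def by auto
    then show False using \<open>sup a b \<in> sharp F\<close> unfolding sharp_def by blast
  qed
qed (auto intro: sharp_upward)

lemma complementary_in_sharp_iff:
  assumes "complementary c d" and "is_filter F"
  shows "c \<in> sharp F \<longleftrightarrow> d \<notin> F"
proof
  assume "c \<in> sharp F"
  moreover have "inf d c = bot" using assms(1) by (simp add: complementary_def inf.commute)
  ultimately show "d \<notin> F" unfolding sharp_def by blast
next
  assume "d \<notin> F"
  then show "c \<in> sharp F"
    using assms complementary_disjoint_iff_le unfolding sharp_def is_filter_def by blast
qed

lemma complemented_Int_sharp_Inter:
  assumes "\<And>F. F \<in> FF \<Longrightarrow> is_filter F"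
  shows "complemented \<inter> sharp (\<Inter>FF) = (\<Union>F\<in>FF. complemented \<inter> sharp F)"
proof -
  have "a \<in> sharp (\<Inter>FF) \<longleftrightarrow> (\<exists>F\<in>FF. a \<in> sharp F)" if "a \<in> complemented" for a
  proof -
    from that obtain b where "complementary a b" using complemented_iff by blast
    then show ?thesis
      using assms is_filter_Inter[OF assms] by (auto simp: complementary_in_sharp_iff)
  qed
  then show ?thesis by blast
qed

lemma complemented_Int_sharp_eq:
  assumes "is_filter F" "is_filter G" "F \<inter> complemented = G \<inter> complemented"
  shows "complemented \<inter> sharp F = complemented \<inter> sharp G"
proof -
  have "a \<in> sharp F \<longleftrightarrow> a \<in> sharp G" if "a \<in> complemented" for a
  proof -
    from that obtain b where b: "complementary a b" using complemented_iff by blast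
    then have "b \<in> F \<longleftrightarrow> b \<in> G" using assms(3) complemented_if_complementary by blast
    then show ?thesis using b assms(1,2) by (simp add: complementary_in_sharp_iff)
  qed
  then show ?thesis by blast
qed

lemma lim_of_eq_INF: "lim_of \<nu> F = (INF a \<in> complemented \<inter> sharp F. \<nu> a)"
  unfolding lim_of_def by (simp only: Setcompr_eq_image)

lemma raw_adh_eq_SUP: "raw_adh lim l = (SUP F \<in> {F. is_filter F \<and> l \<in> sharp F}. lim F)"
  by (simp add: raw_adh_def setcompr_eq_image)

lemma adh_eq_INF: "adh lim l = (INF a \<in> {a \<in> complemented. l \<le> a}. raw_adh lim a)"
  by (simp add: adh_def setcompr_eq_image)

lemma adherence_structure_eq_INF:
  assumes "adherence_structure \<nu>"
  shows "\<nu> l = (INF a \<in> {a \<in> complemented. l \<le> a}. \<nu> a)"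
proof -
  have "\<nu> l = Inf {\<nu> a | a. a \<in> complemented \<and> l \<le> a}"
    using assms unfolding adherence_structure_def by blast
  then show ?thesis by (simp only: setcompr_eq_image)
qed

lemma convergence_structure_lim_of: "convergence_structure (lim_of \<nu>)"
  unfolding convergence_structure_def
proof (intro allI impI)
  fix F G :: "'a set" assume "is_filter F \<and> is_filter G \<and> F \<subseteq> G"
  then have "complemented \<inter> sharp G \<subseteq> complemented \<inter> sharp F"
    using sharp_antimono by blast
  then show "lim_of \<nu> F \<le> lim_of \<nu> G"
    unfolding lim_of_eq_INF by (rule INF_superset_mono) simp
qed

lemma pretopological_lim_of: "pretopological (lim_of \<nu>)"
  unfolding pretopological_def
proof (intro allI impI)
  fix FF :: "'a set set" assume "\<forall>F\<in>FF. is_filter F"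
  then have "complemented \<inter> sharp (\<Inter>FF) = (\<Union>F\<in>FF. complemented \<inter> sharp F)"
    by (simp add: complemented_Int_sharp_Inter)
  then show "lim_of \<nu> (\<Inter>FF) = (INF F\<in>FF. lim_of \<nu> F)"
    unfolding lim_of_eq_INF by (simp only:) (rule antisym; blast intro: INF_greatest INF_lower2)
qed

lemma classical_lim_of: "classical (lim_of \<nu>)"
  unfolding classical_def lim_of_eq_INF using complemented_Int_sharp_eq by metis

lemma classical_pretop_conv_lim_of: "classical_pretop_conv (lim_of \<nu>)"
  by (simp add: classical_pretop_conv_def convergence_structure_lim_of pretopological_lim_of
      classical_lim_of)

lemma lim_of_mono: "\<nu>1 \<le> \<nu>2 \<Longrightarrow> lim_of \<nu>1 F \<le> lim_of \<nu>2 F"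
  unfolding lim_of_eq_INF by (rule INF_mono') (simp add: le_funD)

lemma lim_le_raw_adh: "is_filter F \<Longrightarrow> l \<in> sharp F \<Longrightarrow> lim F \<le> raw_adh lim l"
  unfolding raw_adh_eq_SUP by (rule SUP_upper) simp

lemma raw_adh_mono: "l \<le> l' \<Longrightarrow> raw_adh lim l \<le> raw_adh lim l'"
  unfolding raw_adh_eq_SUP by (rule SUP_subset_mono) (auto intro: sharp_upward)

lemma raw_adh_sup: "raw_adh lim (sup a b) = sup (raw_adh lim a) (raw_adh lim b)"
proof -
  have "{F. is_filter F \<and> sup a b \<in> sharp F}
      = {F. is_filter F \<and> a \<in> sharp F} \<union> {F. is_filter F \<and> b \<in> sharp F}"
    using sup_in_sharp_iff by blast
  then show ?thesis by (simp add: raw_adh_eq_SUP SUP_union)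
qed

lemma raw_adh_bot: "raw_adh lim bot = bot"
proof -
  have no_filter: "{F. is_filter F \<and> bot \<in> sharp F} = {}" using bot_notin_sharp by blast
  show ?thesis unfolding raw_adh_eq_SUP no_filter by simp
qed

lemma adh_complemented: "a \<in> complemented \<Longrightarrow> adh lim a = raw_adh lim a"
  unfolding adh_eq_INF by (rule antisym) (auto intro: INF_lower INF_greatest raw_adh_mono)

lemma adherence_structure_adh: "adherence_structure (adh lim)"
  unfolding adherence_structure_def
proof (intro conjI allI impI)
  show "mono (adh lim)"
    by (rule monoI) (auto simp: adh_eq_INF intro: INF_superset_mono)
  show "adh lim bot = bot"
    by (simp add: adh_complemented bot_complemented raw_adh_bot)
next
  fix a b :: 'a assume "a \<in> complemented \<and> b \<in> complemented"
  then show "adh lim (sup a b) = sup (adh lim a) (adh lim b)"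
    by (simp add: adh_complemented complemented_sup raw_adh_sup)
next
  fix l :: 'a
  have "adh lim l = (INF a \<in> {a \<in> complemented. l \<le> a}. adh lim a)"
    unfolding adh_eq_INF[of lim l] by (rule INF_cong) (simp_all add: adh_complemented)
  then show "adh lim l = Inf {adh lim a |a. a \<in> complemented \<and> l \<le> a}"
    by (simp add: setcompr_eq_image)
qed

lemma adh_mono:
  assumes "\<And>F. is_filter F \<Longrightarrow> lim1 F \<le> lim2 F" shows "adh lim1 \<le> adh lim2"
proof (rule le_funI)
  fix l
  have "raw_adh lim1 a \<le> raw_adh lim2 a" for a
    unfolding raw_adh_eq_SUP by (rule SUP_subset_mono) (auto intro: assms)
  then show "adh lim1 l \<le> adh lim2 l"
    unfolding adh_eq_INF by (rule INF_mono')
qed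

lemma join_prime_filter:
  fixes \<nu> :: "'a::coframe \<Rightarrow> 'a"
  assumes "adherence_structure \<nu>" and "join_prime x"
  obtains F where "is_filter F" and "\<And>b. b \<in> complemented \<Longrightarrow> b \<in> sharp F \<longleftrightarrow> x \<le> \<nu> b"
proof -
  have "mono \<nu>" and "\<nu> bot = bot"
    and \<nu>_sup: "\<And>a b. a \<in> complemented \<Longrightarrow> b \<in> complemented
                  \<Longrightarrow> \<nu> (sup a b) = sup (\<nu> a) (\<nu> b)"
    using assms(1) unfolding adherence_structure_def by blast+
  have "x \<noteq> bot" and x_prime: "\<And>l1 l2. x \<le> sup l1 l2 \<Longrightarrow> x \<le> l1 \<or> x \<le> l2"
    using assms(2) unfolding join_prime_def by blast+
  define G where "G = {c. \<exists>d. complementary c d \<and> \<not> x \<le> \<nu> d}"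
  have "complementary top bot" and "\<not> x \<le> \<nu> bot"
    using \<open>\<nu> bot = bot\<close> \<open>x \<noteq> bot\<close> by (simp_all add: complementary_def bot_unique)
  then have "top \<in> G" unfolding G_def by blast
  moreover have "inf c1 c2 \<in> G" if "c1 \<in> G" "c2 \<in> G" for c1 c2
  proof -
    from that obtain d1 d2
      where d: "complementary c1 d1" "\<not> x \<le> \<nu> d1" "complementary c2 d2" "\<not> x \<le> \<nu> d2"
      unfolding G_def by blast
    then have "\<nu> (sup d1 d2) = sup (\<nu> d1) (\<nu> d2)" using \<nu>_sup complemented_if_complementary by blast
    then have "\<not> x \<le> \<nu> (sup d1 d2)" using d(2,4) x_prime[of "\<nu> d1" "\<nu> d2"] by auto
    then show ?thesis unfolding G_def using complementary_inf_sup[OF d(1,3)] by blast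
  qed
  ultimately have filter: "is_filter (up_closure G)" by (rule is_filter_up_closure)
  have "b \<in> sharp (up_closure G) \<longleftrightarrow> x \<le> \<nu> b" if "b \<in> complemented" for b
  proof -
    from that obtain b' where b: "complementary b b'" using complemented_iff by blast
    have "b' \<in> up_closure G \<longleftrightarrow> \<not> x \<le> \<nu> b"
    proof
      assume "b' \<in> up_closure G"
      then obtain c d where "c \<le> b'" "complementary c d" "\<not> x \<le> \<nu> d"
        unfolding up_closure_def G_def by blast
      have "inf b c = bot"
        using inf_mono[OF order_refl \<open>c \<le> b'\<close>, of b] b
        unfolding complementary_def by (metis le_bot)
      then have "b \<le> d" using complementary_disjoint_iff_le[OF \<open>complementary c d\<close>] by blast
      then show "\<not> x \<le> \<nu> b" using monoD[OF \<open>mono \<nu>\<close>] \<open>\<not> x \<le> \<nu> d\<close> order_trans by blast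
    next
      assume "\<not> x \<le> \<nu> b"
      then have "b' \<in> G" unfolding G_def using complementary_sym[OF b] by blast
      then show "b' \<in> up_closure G" unfolding up_closure_def by blast
    qed
    then show ?thesis using complementary_in_sharp_iff[OF b filter] by blast
  qed
  with filter show thesis by (rule that)
qed

lemma raw_adh_lim_of_complemented:
  fixes \<nu> :: "'a::coframe \<Rightarrow> 'a"
  assumes "spatial TYPE('a)" and "adherence_structure \<nu>" and "a \<in> complemented"
  shows "raw_adh (lim_of \<nu>) a = \<nu> a"
proof (rule antisym)
  show "raw_adh (lim_of \<nu>) a \<le> \<nu> a"
    unfolding raw_adh_eq_SUP lim_of_eq_INF using assms(3) by (auto intro!: SUP_least INF_lower)
next
  have "x \<le> raw_adh (lim_of \<nu>) a" if "join_prime x" and "x \<le> \<nu> a" for x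
  proof -
    obtain F where F: "is_filter F" "\<And>b. b \<in> complemented \<Longrightarrow> b \<in> sharp F \<longleftrightarrow> x \<le> \<nu> b"
      using join_prime_filter[OF assms(2) \<open>join_prime x\<close>] by blast
    have "x \<le> lim_of \<nu> F" unfolding lim_of_eq_INF using F(2) by (auto intro: INF_greatest)
    also have "\<dots> \<le> raw_adh (lim_of \<nu>) a"
      using F assms(3) \<open>x \<le> \<nu> a\<close> by (auto intro: lim_le_raw_adh)
    finally show ?thesis .
  qed
  then have "Sup {x. join_prime x \<and> x \<le> \<nu> a} \<le> raw_adh (lim_of \<nu>) a" by (auto intro: Sup_least)
  then show "\<nu> a \<le> raw_adh (lim_of \<nu>) a" using assms(1) unfolding spatial_def by metis
qed

lemma adh_lim_of:
  fixes \<nu> :: "'a::coframe \<Rightarrow> 'a"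
  assumes "spatial TYPE('a)" and "adherence_structure \<nu>"
  shows "adh (lim_of \<nu>) = \<nu>"
proof
  fix l
  show "adh (lim_of \<nu>) l = \<nu> l"
    unfolding adh_eq_INF adherence_structure_eq_INF[OF assms(2), of l]
    by (rule INF_cong) (simp_all add: raw_adh_lim_of_complemented assms)
qed

lemma pretopological_Inter_converging:
  assumes "pretopological lim"
  shows "is_filter (\<Inter>{G. is_filter G \<and> m \<le> lim G})"
    and "m \<le> lim (\<Inter>{G. is_filter G \<and> m \<le> lim G})"
proof -
  show "is_filter (\<Inter>{G. is_filter G \<and> m \<le> lim G})" by (rule is_filter_Inter) simp
  have "lim (\<Inter>{G. is_filter G \<and> m \<le> lim G})
      = (INF G \<in> {G. is_filter G \<and> m \<le> lim G}. lim G)"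
    using assms unfolding pretopological_def by simp
  then show "m \<le> lim (\<Inter>{G. is_filter G \<and> m \<le> lim G})" by (auto intro: INF_greatest)
qed

lemma classical_lim_up_closure_complemented:
  assumes "classical lim" and "is_filter V"
  shows "is_filter (up_closure (V \<inter> complemented))"
    and "lim (up_closure (V \<inter> complemented)) = lim V"
proof -
  show filter: "is_filter (up_closure (V \<inter> complemented))"
  proof (rule is_filter_up_closure)
    show "top \<in> V \<inter> complemented" using assms(2) top_in_filter top_complemented by blast
    show "inf c1 c2 \<in> V \<inter> complemented"
      if "c1 \<in> V \<inter> complemented" "c2 \<in> V \<inter> complemented" for c1 c2
      using that assms(2) complemented_inf unfolding is_filter_def by blast
  qed
  have "up_closure (V \<inter> complemented) \<inter> complemented = V \<inter> complemented"
    using assms(2) unfolding up_closure_def is_filter_def by blast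
  then show "lim (up_closure (V \<inter> complemented)) = lim V"
    using assms filter unfolding classical_def by blast
qed

lemma lim_le_lim_of_adh:
  assumes "is_filter F" shows "lim F \<le> lim_of (adh lim) F"
  unfolding lim_of_eq_INF
  by (rule INF_greatest) (simp add: adh_complemented lim_le_raw_adh assms)

lemma Inter_converging_Int_complemented_subset:
  assumes "is_filter F" and "prime_below m (lim_of (adh lim) F)"
  shows "\<Inter>{G. is_filter G \<and> m \<le> lim G} \<inter> complemented \<subseteq> F"
proof
  fix c assume c: "c \<in> \<Inter>{G. is_filter G \<and> m \<le> lim G} \<inter> complemented"
  show "c \<in> F"
  proof (rule ccontr)
    assume "c \<notin> F"
    from c obtain d where d: "complementary d c" using complemented_iff complementary_sym by blast
    then have "d \<in> complemented \<inter> sharp F"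
      using complementary_in_sharp_iff assms(1) \<open>c \<notin> F\<close> complemented_iff by blast
    then have "lim_of (adh lim) F \<le> raw_adh lim d"
      unfolding lim_of_eq_INF by (auto intro: INF_lower2 simp: adh_complemented)
    then obtain G where G: "is_filter G" "d \<in> sharp G" "m \<le> lim G"
      using assms(2) unfolding prime_below_def raw_adh_def by blast
    then have "c \<in> G" using c by blast
    then show False using complementary_in_sharp_iff[OF d G(1)] G(2) by blast
  qed
qed

lemma lim_of_adh:
  fixes lim :: "'a::coframe set \<Rightarrow> 'a"
  assumes "prime_continuous TYPE('a)" and "classical_pretop_conv lim" and "is_filter F"
  shows "lim_of (adh lim) F = lim F"
proof (rule antisym)
  have "m \<le> lim F" if "prime_below m (lim_of (adh lim) F)" for m
  proof -
    define V where "V = \<Inter>{G. is_filter G \<and> m \<le> lim G}"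
    define H where "H = up_closure (V \<inter> complemented)"
    have V: "is_filter V" "m \<le> lim V"
      using pretopological_Inter_converging assms(2)
      unfolding V_def classical_pretop_conv_def by blast+
    have H: "is_filter H" "lim H = lim V"
      using classical_lim_up_closure_complemented[OF _ V(1)] assms(2)
      unfolding H_def classical_pretop_conv_def by blast+
    have "V \<inter> complemented \<subseteq> F"
      unfolding V_def using assms(3) that by (rule Inter_converging_Int_complemented_subset)
    then have "H \<subseteq> F" using assms(3) unfolding H_def up_closure_def is_filter_def by blast
    then have "lim H \<le> lim F"
      using assms(2,3) H(1) unfolding classical_pretop_conv_def convergence_structure_def by blast
    then show ?thesis using V H by simp
  qed
  then show "lim_of (adh lim) F \<le> lim F"
    using assms(1) unfolding prime_continuous_def by (metis Sup_least mem_Collect_eq)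
  show "lim F \<le> lim_of (adh lim) F" using assms(3) by (rule lim_le_lim_of_adh)
qed

lemma adherence_structure_le_iff_lim_of_le:
  fixes \<nu>1 \<nu>2 :: "'a::coframe \<Rightarrow> 'a"
  assumes "spatial TYPE('a)" and "adherence_structure \<nu>1" and "adherence_structure \<nu>2"
  shows "\<nu>1 \<le> \<nu>2 \<longleftrightarrow> (\<forall>F. is_filter F \<longrightarrow> lim_of \<nu>1 F \<le> lim_of \<nu>2 F)"
proof
  assume "\<nu>1 \<le> \<nu>2"
  then show "\<forall>F. is_filter F \<longrightarrow> lim_of \<nu>1 F \<le> lim_of \<nu>2 F" by (simp add: lim_of_mono)
next
  assume "\<forall>F. is_filter F \<longrightarrow> lim_of \<nu>1 F \<le> lim_of \<nu>2 F"
  then have "adh (lim_of \<nu>1) \<le> adh (lim_of \<nu>2)" by (simp add: adh_mono)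
  then show "\<nu>1 \<le> \<nu>2" by (simp add: adh_lim_of assms)
qed

lemma convergence_le_iff_adh_le:
  fixes lim1 lim2 :: "'a::coframe set \<Rightarrow> 'a"
  assumes "prime_continuous TYPE('a)"
    and "classical_pretop_conv lim1" and "classical_pretop_conv lim2"
  shows "(\<forall>F. is_filter F \<longrightarrow> lim1 F \<le> lim2 F) \<longleftrightarrow> adh lim1 \<le> adh lim2"
proof
  assume "\<forall>F. is_filter F \<longrightarrow> lim1 F \<le> lim2 F"
  then show "adh lim1 \<le> adh lim2" by (simp add: adh_mono)
next
  assume "adh lim1 \<le> adh lim2"
  show "\<forall>F. is_filter F \<longrightarrow> lim1 F \<le> lim2 F"
  proof (intro allI impI)
    fix F :: "'a set" assume "is_filter F"
    then show "lim1 F \<le> lim2 F"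
      using lim_of_mono[OF \<open>adh lim1 \<le> adh lim2\<close>, of F] by (simp add: lim_of_adh assms)
  qed
qed

theorem mainTheorem10:
  shows "(spatial TYPE('a::coframe) \<longrightarrow>
            (\<forall>\<nu>::'a \<Rightarrow> 'a. adherence_structure \<nu> \<longrightarrow> adh (lim_of \<nu>) = \<nu>))
       \<and> (prime_continuous TYPE('a) \<longrightarrow>
            (\<forall>lim::'a set \<Rightarrow> 'a. classical_pretop_conv lim \<longrightarrow>
               (\<forall>F. is_filter F \<longrightarrow> lim_of (adh lim) F = lim F)))
       \<and> (spatial TYPE('a) \<and> prime_continuous TYPE('a) \<longrightarrow>
            (\<forall>\<nu>::'a \<Rightarrow> 'a. adherence_structure \<nu> \<longrightarrow> classical_pretop_conv (lim_of \<nu>))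
          \<and> (\<forall>lim::'a set \<Rightarrow> 'a. classical_pretop_conv lim \<longrightarrow> adherence_structure (adh lim))
          \<and> (\<forall>\<nu>::'a \<Rightarrow> 'a. adherence_structure \<nu> \<longrightarrow> adh (lim_of \<nu>) = \<nu>)
          \<and> (\<forall>lim::'a set \<Rightarrow> 'a. classical_pretop_conv lim \<longrightarrow>
               (\<forall>F. is_filter F \<longrightarrow> lim_of (adh lim) F = lim F))
          \<and> (\<forall>\<nu>1 \<nu>2::'a \<Rightarrow> 'a. adherence_structure \<nu>1 \<longrightarrow> adherence_structure \<nu>2 \<longrightarrow>
               (\<nu>1 \<le> \<nu>2 \<longleftrightarrow> (\<forall>F. is_filter F \<longrightarrow> lim_of \<nu>1 F \<le> lim_of \<nu>2 F)))
          \<and> (\<forall>lim1 lim2::'a set \<Rightarrow> 'a. classical_pretop_conv lim1 \<longrightarrow> classical_pretop_conv lim2 \<longrightarrow>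
               ((\<forall>F. is_filter F \<longrightarrow> lim1 F \<le> lim2 F) \<longleftrightarrow> adh lim1 \<le> adh lim2)))"
  by (intro conjI impI allI; (elim conjE)?;
      rule adh_lim_of lim_of_adh classical_pretop_conv_lim_of adherence_structure_adh
        adherence_structure_le_iff_lim_of_le convergence_le_iff_adh_le;
      assumption)

end
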